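(* For every LCNF formula $\Phi$ and any two labelled clauses $C_1^{L_1}, C_2^{L_2} \in \Phi$, $\mathsf{MCS}(\mathsf{sub}(\Phi, C_1^{L_1}, C_2^{L_2})) = \mathsf{MCS}(\Phi)$.
   Context: Fix a countable set $Lbls$ of labels. A labelled clause $C^L$ is a pair of a clause $C$ (a finite set of literals) and a finite set $L \subseteq Lbls$. An LCNF formula $\Phi$ is a finite set of labelled clauses; $Cls(\Phi) = \{C : C^L \in \Phi\}$ and $Lbls(\Phi) = \bigcup_{C^L\in\Phi} L$. $\Phi$ is satisfiable iff $Cls(\Phi)$ is. For $M \subseteq Lbls(\Phi)$, the induced subformula is $\Phi|_M = \{C^L \in \Phi : L \subseteq M\}$. A set $R \subseteq Lbls(\Phi)$ is an MCS of $\Phi$ if (i) $\Phi|_{Lbls(\Phi)\setminus R}$ is satisfiable and (ii) for every $l \in R$, $\Phi|_{(Lbls(\Phi)\setminus R)\cup\{l\}}$ is unsatisfiable; $\mathsf{MCS}(\Phi)$ is the set of all MCSes of $\Phi$. A labelled clause $C_1^{L_1}$ subsumes $C_2^{L_2}$, written $C_1^{L_1} \subset C_2^{L_2}$, if $C_1 \subset C_2$ and $L_1 \subseteq L_2$. Define $\mathsf{sub}(\Phi, C_1^{L_1}, C_2^{L_2}) = \Phi \setminus \{C_2^{L_2}\}$ if $C_1^{L_1} \subset C_2^{L_2}$, and $\mathsf{sub}(\Phi, C_1^{L_1}, C_2^{L_2}) = \Phi$ otherwise. *)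

theory Defs
  imports "HOL-Library.Countable"
begin

datatype 'v literal = Pos 'v | Neg 'v

type_synonym 'v clause = "'v literal set"
type_synonym ('v, 'l) lclause = "'v clause \<times> 'l set"

fun lit_true :: "('v \<Rightarrow> bool) \<Rightarrow> 'v literal \<Rightarrow> bool" where
  "lit_true \<sigma> (Pos v) = \<sigma> v"
| "lit_true \<sigma> (Neg v) = (\<not> \<sigma> v)"

definition cls_satisfiable :: "'v clause set \<Rightarrow> bool" where
  "cls_satisfiable S \<longleftrightarrow> (\<exists>\<sigma>. \<forall>C\<in>S. \<exists>x\<in>C. lit_true \<sigma> x)"

definition is_LCNF :: "('v, 'l) lclause set \<Rightarrow> bool" where
  "is_LCNF \<Phi> \<longleftrightarrow> finite \<Phi> \<and> (\<forall>(C, L)\<in>\<Phi>. finite C \<and> finite L)"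

definition Cls :: "('v, 'l) lclause set \<Rightarrow> 'v clause set" where
  "Cls \<Phi> = fst ` \<Phi>"

definition Lbls :: "('v, 'l) lclause set \<Rightarrow> 'l set" where
  "Lbls \<Phi> = \<Union> (snd ` \<Phi>)"

definition lsat :: "('v, 'l) lclause set \<Rightarrow> bool" where
  "lsat \<Phi> \<longleftrightarrow> cls_satisfiable (Cls \<Phi>)"

definition induced :: "('v, 'l) lclause set \<Rightarrow> 'l set \<Rightarrow> ('v, 'l) lclause set" where
  "induced \<Phi> M = {(C, L) \<in> \<Phi>. L \<subseteq> M}"

definition is_MCS :: "('v, 'l) lclause set \<Rightarrow> 'l set \<Rightarrow> bool" where
  "is_MCS \<Phi> R \<longleftrightarrow> R \<subseteq> Lbls \<Phi>
     \<and> lsat (induced \<Phi> (Lbls \<Phi> - R))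
     \<and> (\<forall>l\<in>R. \<not> lsat (induced \<Phi> ((Lbls \<Phi> - R) \<union> {l})))"

definition MCS :: "('v, 'l) lclause set \<Rightarrow> 'l set set" where
  "MCS \<Phi> = {R. is_MCS \<Phi> R}"

definition lsubsumes :: "('v, 'l) lclause \<Rightarrow> ('v, 'l) lclause \<Rightarrow> bool" where
  "lsubsumes c1 c2 \<longleftrightarrow> fst c1 \<subset> fst c2 \<and> snd c1 \<subseteq> snd c2"

definition sub :: "('v, 'l) lclause set \<Rightarrow> ('v, 'l) lclause \<Rightarrow> ('v, 'l) lclause \<Rightarrow> ('v, 'l) lclause set" where
  "sub \<Phi> c1 c2 = (if lsubsumes c1 c2 then \<Phi> - {c2} else \<Phi>)"

end

theory Submission
  imports Defs
begin

text \<open>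
  Removing a clause C2 subsumed by C1 (C1 \<subset> C2, L1 \<subseteq> L2) does not change the
  satisfiability of any induced subformula: whenever C2 is kept in the restriction to M,
  so is C1 (as L1 \<subseteq> L2 \<subseteq> M), and every assignment satisfying C1 satisfies C2.
  The MCSes of a formula, in turn, are determined by the satisfiability of its induced
  subformulas alone: labels outside the formula do not affect the restriction, so they
  can neither enter an MCS nor distinguish two equisatisfiable formulas.
\<close>

lemma induced_Int_Lbls: "induced \<Phi> (M \<inter> Lbls \<Phi>) = induced \<Phi> M"
  by (auto simp: induced_def Lbls_def)

lemma lsat_induced_Int_Lbls_both:
  assumes "\<And>M. lsat (induced \<Phi> M) = lsat (induced \<Psi> M)"
  shows "lsat (induced \<Phi> (M \<inter> Lbls \<Phi> \<inter> Lbls \<Psi>)) = lsat (induced \<Phi> M)"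
proof -
  have "lsat (induced \<Phi> (M \<inter> Lbls \<Phi> \<inter> Lbls \<Psi>)) = lsat (induced \<Psi> (M \<inter> Lbls \<Phi> \<inter> Lbls \<Psi>))"
    by (rule assms)
  also have "\<dots> = lsat (induced \<Psi> (M \<inter> Lbls \<Phi>))"
    by (simp only: induced_Int_Lbls)
  also have "\<dots> = lsat (induced \<Phi> (M \<inter> Lbls \<Phi>))"
    by (rule assms[symmetric])
  finally show ?thesis
    by (simp only: induced_Int_Lbls)
qed

lemma is_MCS_transfer:
  assumes equisat: "\<And>M. lsat (induced \<Phi> M) = lsat (induced \<Psi> M)"
    and mcs: "is_MCS \<Phi> R"
  shows "is_MCS \<Psi> R"
proof -
  let ?E = "Lbls \<Phi>" and ?E' = "Lbls \<Psi>"
  have equisat': "\<And>M. lsat (induced \<Psi> M) = lsat (induced \<Phi> M)"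
    using equisat by simp
  have via_common: "lsat (induced \<Phi> M) = lsat (induced \<Phi> N)"
    if "M \<inter> ?E \<inter> ?E' = N \<inter> ?E \<inter> ?E'" for M N
    using lsat_induced_Int_Lbls_both[OF equisat, of M] lsat_induced_Int_Lbls_both[OF equisat, of N]
      that by simp
  have R: "R \<subseteq> ?E" and sat: "lsat (induced \<Phi> (?E - R))"
    and max: "\<And>l. l \<in> R \<Longrightarrow> \<not> lsat (induced \<Phi> (?E - R \<union> {l}))"
    using mcs by (auto simp: is_MCS_def)
  have R': "R \<subseteq> ?E'"
  proof
    fix l assume l: "l \<in> R"
    show "l \<in> ?E'"
    proof (rule ccontr)
      assume "l \<notin> ?E'"
      then have "lsat (induced \<Phi> (?E - R \<union> {l})) = lsat (induced \<Phi> (?E - R))"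
        by (intro via_common) blast
      with sat max[OF l] show False by simp
    qed
  qed
  have "lsat (induced \<Phi> (?E' - R)) = lsat (induced \<Phi> (?E - R))"
    by (intro via_common) blast
  with sat have "lsat (induced \<Psi> (?E' - R))"
    by (simp add: equisat')
  moreover have "\<not> lsat (induced \<Psi> (?E' - R \<union> {l}))" if "l \<in> R" for l
  proof -
    have "lsat (induced \<Phi> (?E' - R \<union> {l})) = lsat (induced \<Phi> (?E - R \<union> {l}))"
      using R R' that by (intro via_common) blast
    with max[OF that] show ?thesis
      by (simp add: equisat')
  qed
  ultimately show ?thesis
    using R' by (simp add: is_MCS_def)
qed

lemma MCS_eqI_equisatisfiable:
  assumes "\<And>M. lsat (induced \<Phi> M) = lsat (induced \<Psi> M)"
  shows "MCS \<Phi> = MCS \<Psi>"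
proof -
  have "is_MCS \<Psi> R" if "is_MCS \<Phi> R" for R
    using assms that by (rule is_MCS_transfer)
  moreover have "is_MCS \<Phi> R" if "is_MCS \<Psi> R" for R
    using assms[symmetric] that by (rule is_MCS_transfer)
  ultimately show ?thesis
    unfolding MCS_def by blast
qed

lemma cls_satisfiable_insert_superset:
  assumes "C' \<in> S" and "C' \<subseteq> C"
  shows "cls_satisfiable (insert C S) = cls_satisfiable S"
proof
  assume "cls_satisfiable S"
  then obtain \<sigma> where "\<forall>D\<in>S. \<exists>x\<in>D. lit_true \<sigma> x"
    unfolding cls_satisfiable_def by blast
  with assms have "\<forall>D\<in>insert C S. \<exists>x\<in>D. lit_true \<sigma> x"
    by blast
  then show "cls_satisfiable (insert C S)"
    unfolding cls_satisfiable_def by blast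
qed (auto simp: cls_satisfiable_def)

lemma lsat_induced_Diff_subsumed:
  assumes "lsubsumes (C1, L1) (C2, L2)" and "(C1, L1) \<in> \<Phi>"
  shows "lsat (induced (\<Phi> - {(C2, L2)}) M) = lsat (induced \<Phi> M)"
proof (cases "(C2, L2) \<in> induced \<Phi> M")
  case True
  let ?\<Psi> = "induced (\<Phi> - {(C2, L2)}) M"
  have subsumed: "C1 \<subset> C2" "L1 \<subseteq> L2"
    using assms(1) by (simp_all add: lsubsumes_def)
  have "L2 \<subseteq> M"
    using True by (simp add: induced_def)
  with subsumed assms(2) have "(C1, L1) \<in> ?\<Psi>"
    by (auto simp: induced_def)
  then have "C1 \<in> Cls ?\<Psi>"
    by (force simp: Cls_def)
  moreover have "Cls (induced \<Phi> M) = insert C2 (Cls ?\<Psi>)"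
    using True by (auto simp: induced_def Cls_def image_iff)
  ultimately show ?thesis
    using subsumed by (simp add: lsat_def cls_satisfiable_insert_superset)
next
  case False
  then have "induced (\<Phi> - {(C2, L2)}) M = induced \<Phi> M"
    by (auto simp: induced_def)
  then show ?thesis by simp
qed

theorem proposition3:
  fixes \<Phi> :: "('v, 'l::countable) lclause set"
  assumes "is_LCNF \<Phi>" and "c1 \<in> \<Phi>" and "c2 \<in> \<Phi>"
  shows "MCS (sub \<Phi> c1 c2) = MCS \<Phi>"
proof (cases "lsubsumes c1 c2")
  case True
  obtain C1 L1 C2 L2 where "c1 = (C1, L1)" and "c2 = (C2, L2)"
    by fastforce
  with True assms(2) have "MCS (\<Phi> - {c2}) = MCS \<Phi>"
    by (metis MCS_eqI_equisatisfiable lsat_induced_Diff_subsumed)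
  with True show ?thesis
    by (simp add: sub_def)
qed (simp add: sub_def)

end
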